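(* Fix integers $N\ge 2$ and $K\ge 1$. For any Boolean tensor $\mathcal{B}\in\{0,1\}^{N\times N\times K}$ with frontal slices $\mathbf{B}_1,\dots,\mathbf{B}_K$, and any $r\in\mathbb{N}^+$ with \[ r\ge\min\Big\{2KN+1,\;4\sum_{k=1}^K\mathrm{rrank}(\mathbf{B}_k)+1\Big\},\] the set $\pi(\mathcal{M}^{\text{HolE}}_r)$ contains a ranking tensor consistent with $\mathcal{B}$.
   Context: A score-based model assigns a score $s_k(i,j)\in\mathbb{R}$ to each triple, $i,j\in\{1,\dots,N\}$, $k\in\{1,\dots,K\}$; its scoring tensor has frontal slices $\mathbf{S}_k$ with $[\mathbf{S}_k]_{ij}=s_k(i,j)$. For a real $N\times N$ matrix $\mathbf{S}$, $\pi(\mathbf{S})$ is the matrix of dense ranks: $\pi_{ij}(\mathbf{S})=1+$ (number of distinct values among entries of $\mathbf{S}$ strictly larger than $s_{ij}$). For tensors, $\pi$ acts slicewise; for a set $X$, $\pi(X)=\{\pi(x):x\in X\}$. HolE of size $r$: parameters $\mathbf{A}\in\mathbb{R}^{N\times r}$ (rows $\mathbf{a}_i$), $\mathbf{R}\in\mathbb{R}^{K\times r}$ (rows $\mathbf{r}_k$), score $\mathbf{r}_k^T(\mathbf{a}_i\star\mathbf{a}_j)$ where $(\mathbf{a}\star\mathbf{b})_m=\sum_{t=1}^r a_t\, b_{((m+t-2)\bmod r)+1}$ is circular correlation; $\mathcal{M}^{\text{HolE}}_r$ is the set of scoring tensors of such models. A ranking tensor $\mathcal{P}$ is consistent with $\mathcal{B}$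 if for every $k$ and all $i,j,i',j'$: $b_{ijk}=1$ and $b_{i'j'k}=0$ imply $p_{ijk}<p_{i'j'k}$. Rounding rank: $\mathrm{round}$ maps each entry $x$ of a real matrix to $1$ if $x\ge 1/2$ and to $0$ otherwise; for $\mathbf{B}\in\{0,1\}^{m\times n}$, $\mathrm{rrank}(\mathbf{B})=\min\{\mathrm{rank}(\mathbf{A}):\mathbf{A}\in\mathbb{R}^{m\times n},\ \mathrm{round}(\mathbf{A})=\mathbf{B}\}$. *)

theory Defs
  imports "HOL-Analysis.Analysis"
begin

text \<open>Entities are indexed by a finite type 'n (N = CARD('n)), relations by a
finite type 'k (K = CARD('k)). A tensor is a function 'n => 'n => 'k => _,
with T i j k the (i,j) entry of the k-th frontal slice.\<close>

definition dense_rank :: "('n::finite \<Rightarrow> 'm::finite \<Rightarrow> real) \<Rightarrow> 'n \<Rightarrow> 'm \<Rightarrow> nat" where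
  "dense_rank S i j = 1 + card {v. (\<exists>i' j'. v = S i' j') \<and> v > S i j}"

definition rank_tensor :: "('n::finite \<Rightarrow> 'n \<Rightarrow> 'k \<Rightarrow> real) \<Rightarrow> ('n \<Rightarrow> 'n \<Rightarrow> 'k \<Rightarrow> nat)" where
  "rank_tensor T = (\<lambda>i j k. dense_rank (\<lambda>i' j'. T i' j' k) i j)"

definition circ_corr :: "nat \<Rightarrow> (nat \<Rightarrow> real) \<Rightarrow> (nat \<Rightarrow> real) \<Rightarrow> nat \<Rightarrow> real" where
  "circ_corr r a b m = (\<Sum>t<r. a t * b ((m + t) mod r))"

text \<open>HolE score r_k^T (a_i star a_j); rows a_i = A i, r_k = R k (entries 0..r-1).\<close>
definition hole_score :: "nat \<Rightarrow> ('n \<Rightarrow> nat \<Rightarrow> real) \<Rightarrow> ('k \<Rightarrow> nat \<Rightarrow> real) \<Rightarrow> 'n \<Rightarrow> 'n \<Rightarrow> 'k \<Rightarrow> real" where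
  "hole_score r A R i j k = (\<Sum>m<r. R k m * circ_corr r (A i) (A j) m)"

definition hole_models :: "nat \<Rightarrow> ('n::finite \<Rightarrow> 'n \<Rightarrow> 'k::finite \<Rightarrow> real) set" where
  "hole_models r = {hole_score r A R | A R. True}"

definition consistent :: "('n \<Rightarrow> 'n \<Rightarrow> 'k \<Rightarrow> nat) \<Rightarrow> ('n \<Rightarrow> 'n \<Rightarrow> 'k \<Rightarrow> bool) \<Rightarrow> bool" where
  "consistent P B \<longleftrightarrow> (\<forall>k i j i' j'. B i j k \<and> \<not> B i' j' k \<longrightarrow> P i j k < P i' j' k)"

definition round_mat :: "real^'n^'m \<Rightarrow> real^'n^'m" where
  "round_mat A = (\<chi> i j. if A $ i $ j \<ge> 1/2 then 1 else 0)"

definition rrank :: "real^'n^'m \<Rightarrow> nat" where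
  "rrank B = Inf {rank A | A. round_mat A = B}"

definition bool_slice :: "('n \<Rightarrow> 'n \<Rightarrow> 'k \<Rightarrow> bool) \<Rightarrow> 'k \<Rightarrow> real^'n^'n" where
  "bool_slice B k = (\<chi> i j. if B i j k then 1 else 0)"

end

theory Submission
  imports Defs
begin

text \<open>Dense ranks only see the order of the scores, so it suffices to find a real tensor X that
separates, slice by slice, the true triples from the false ones and that is a limit of HolE scoring
tensors: a close enough approximant still separates them.

For r > 2KN every tensor is such a limit. Entity i gets the weight C^t at position t = i of a first
block of N positions, and block k + 1 stores slice k with weights C^(-t); the relation vector picks
the shift that aligns the two blocks, so one product reproduces X i j k exactly while every other
product of the correlation is at most of order 1/C.

For r > 4 \<Sum>k rrank(B_k), take matrices of minimal rank rounding to the slices (their entries are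
at least 1/2 exactly at the true triples) and write them as S = \<Sum>k rrank(B_k) rank-one terms
u_s v_s^T. Storing u_s at position s and v_s at the mirror position 2S - 1 - s, with Gaussian
weights centred at S - 1/2, the correlation at shift 2S - 1 - 2s recovers u_s v_s^T up to
cross terms that are exponentially small in the width of the Gaussian.\<close>

lemma dense_rank_less:
  fixes S :: "'n::finite \<Rightarrow> 'm::finite \<Rightarrow> real"
  assumes "S i j > S i' j'"
  shows "dense_rank S i j < dense_rank S i' j'"
proof -
  let ?above = "\<lambda>x. {v. (\<exists>a b. v = S a b) \<and> v > x}"
  have "?above (S i' j') \<subseteq> range (case_prod S)"
    by auto
  then have "finite (?above (S i' j'))"
    by (rule finite_subset) simp
  moreover have "?above (S i j) \<subset> ?above (S i' j')"
    using assms by auto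
  ultimately show ?thesis
    unfolding dense_rank_def by (simp add: psubset_card_mono)
qed

lemma consistent_rank_tensor:
  fixes T :: "'n::finite \<Rightarrow> 'n \<Rightarrow> 'k \<Rightarrow> real"
  assumes "\<And>k i j i' j'. B i j k \<Longrightarrow> \<not> B i' j' k \<Longrightarrow> T i j k > T i' j' k"
  shows "consistent (rank_tensor T) B"
  unfolding consistent_def rank_tensor_def using assms by (auto intro!: dense_rank_less)

definition hole_approximable :: "nat \<Rightarrow> ('n \<Rightarrow> 'n \<Rightarrow> 'k \<Rightarrow> real) \<Rightarrow> bool" where
  "hole_approximable r X \<longleftrightarrow>
     (\<forall>\<epsilon>>0. \<exists>A R. \<forall>i j k. \<bar>hole_score r A R i j k - X i j k\<bar> \<le> \<epsilon>)"

lemma hole_approximable_imp_consistent: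
  fixes X :: "'n::finite \<Rightarrow> 'n \<Rightarrow> 'k::finite \<Rightarrow> real"
  assumes approx: "hole_approximable r X"
    and sep: "\<And>k i j i' j'. B i j k \<Longrightarrow> \<not> B i' j' k \<Longrightarrow> X i j k > X i' j' k"
  shows "\<exists>P \<in> rank_tensor ` (hole_models r :: ('n \<Rightarrow> 'n \<Rightarrow> 'k \<Rightarrow> real) set). consistent P B"
proof -
  define gaps where "gaps = {X i j k - X i' j' k | i j k i' j'. B i j k \<and> \<not> B i' j' k}"
  have "gaps \<subseteq> (\<lambda>(i, j, k, i', j'). X i j k - X i' j' k) ` UNIV"
    unfolding gaps_def by (force simp: image_iff)
  then have "finite gaps"
    by (rule finite_subset) simp
  moreover have "\<forall>d\<in>gaps. d > 0"
    unfolding gaps_def using sep by auto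
  moreover define \<eta> where "\<eta> = Min (insert 1 gaps)"
  ultimately have \<eta>_pos: "\<eta> > 0" and \<eta>_le: "\<And>d. d \<in> gaps \<Longrightarrow> \<eta> \<le> d"
    by auto
  obtain A R where AR: "\<forall>i j k. \<bar>hole_score r A R i j k - X i j k\<bar> \<le> \<eta> / 3"
    using approx \<eta>_pos unfolding hole_approximable_def by (meson divide_pos_pos zero_less_numeral)
  have "consistent (rank_tensor (hole_score r A R)) B"
  proof (rule consistent_rank_tensor)
    fix k i j i' j' assume "B i j k" "\<not> B i' j' k"
    then have "\<eta> \<le> X i j k - X i' j' k"
      by (intro \<eta>_le) (unfold gaps_def, blast)
    then show "hole_score r A R i j k > hole_score r A R i' j' k"
      using AR[rule_format, of i j k] AR[rule_format, of i' j' k] \<eta>_pos by linarith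
  qed
  moreover have "hole_score r A R \<in> (hole_models r :: ('n \<Rightarrow> 'n \<Rightarrow> 'k \<Rightarrow> real) set)"
    unfolding hole_models_def by blast
  ultimately show ?thesis by blast
qed

lemma hole_score_slots:
  assumes "finite I" and "\<And>s. s \<in> I \<Longrightarrow> d s < r"
  shows "hole_score r A (\<lambda>k m. \<Sum>s\<in>I. if \<kappa> s = k \<and> m = d s then c s else 0) i j k
       = (\<Sum>s\<in>I. if \<kappa> s = k then c s * circ_corr r (A i) (A j) (d s) else 0)"
proof -
  have "hole_score r A (\<lambda>k m. \<Sum>s\<in>I. if \<kappa> s = k \<and> m = d s then c s else 0) i j k
      = (\<Sum>s\<in>I. \<Sum>m<r. (if \<kappa> s = k \<and> m = d s then c s else 0) * circ_corr r (A i) (A j) m)"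
    unfolding hole_score_def sum_distrib_right by (rule sum.swap)
  also have "\<dots> = (\<Sum>s\<in>I. if \<kappa> s = k then c s * circ_corr r (A i) (A j) (d s) else 0)"
  proof (rule sum.cong)
    fix s assume "s \<in> I"
    then show "(\<Sum>m<r. (if \<kappa> s = k \<and> m = d s then c s else 0) * circ_corr r (A i) (A j) m)
        = (if \<kappa> s = k then c s * circ_corr r (A i) (A j) (d s) else 0)"
      using assms(2) by (cases "\<kappa> s = k") (simp_all add: if_distrib[of "\<lambda>x. x * _"] sum.delta' cong: if_cong)
  qed simp
  finally show ?thesis .
qed

lemma obtain_abs_bound:
  fixes f :: "'a \<Rightarrow> real"
  assumes "finite D"
  obtains M where "M \<ge> 1" "\<And>x. x \<in> D \<Longrightarrow> \<bar>f x\<bar> \<le> M"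
proof
  show "1 + (\<Sum>y\<in>D. \<bar>f y\<bar>) \<ge> 1"
    by (simp add: sum_nonneg)
  show "\<bar>f x\<bar> \<le> 1 + (\<Sum>y\<in>D. \<bar>f y\<bar>)" if "x \<in> D" for x
    using member_le_sum[OF that, of "\<lambda>y. \<bar>f y\<bar>"] assms by simp
qed

text \<open>In the construction below entry t of an entity vector is at most M C^t for t < N and
M C^(-t) beyond, so the term t of the correlation at shift m, weighted by C^m, is at most
M^2 C^e where e is the exponent bounded here.\<close>

lemma wrapped_exponent_negative:
  fixes m t N r :: nat
  assumes "2 * m < r" "N \<le> m" "0 < N" "N \<le> t" "t < r"
  defines "s \<equiv> (m + t) mod r"
  shows "real m - real t + (if s < N then real s else - real s) \<le> -1"
proof (cases "m + t < r")
  case True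
  then show ?thesis using assms by (simp add: s_def)
next
  case False
  then have "s = m + t - r"
    using assms by (simp add: s_def mod_if le_mod_geq)
  then show ?thesis using False assms by (simp add: of_nat_diff)
qed

lemma wrapped_term_bound:
  fixes a b :: "nat \<Rightarrow> real" and C M :: real
  assumes C: "C \<ge> 1" and mt: "2 * m < r" "N \<le> m" "0 < N" "N \<le> t" "t < r"
    and a: "\<And>t. \<bar>a t\<bar> \<le> M * C powr (if t < N then real t else - real t)"
    and b: "\<And>t. \<bar>b t\<bar> \<le> M * C powr (if t < N then real t else - real t)"
  shows "\<bar>C powr m * a t * b ((m + t) mod r)\<bar> \<le> M\<^sup>2 / C"
proof -
  let ?s = "(m + t) mod r"
  let ?e = "\<lambda>t. if t < N then real t else - real t"
  have M: "M \<ge> 0"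
    using order_trans[OF abs_ge_zero a] C by (simp add: zero_le_mult_iff)
  have "\<bar>C powr m * a t * b ?s\<bar> = C powr m * \<bar>a t\<bar> * \<bar>b ?s\<bar>"
    by (simp add: abs_mult)
  also have "\<dots> \<le> C powr m * (M * C powr (- real t)) * (M * C powr ?e ?s)"
    using a[of t] b[of ?s] M mt by (intro mult_mono mult_left_mono) auto
  also have "\<dots> = M\<^sup>2 * C powr (real m - real t + ?e ?s)"
    by (simp add: powr_add[symmetric] power2_eq_square mult_ac)
  also have "\<dots> \<le> M\<^sup>2 * C powr (-1)"
    using wrapped_exponent_negative[OF mt] C by (intro mult_left_mono powr_mono) auto
  finally show ?thesis
    using C by (simp add: powr_minus divide_inverse)
qed

definition exp_block_vectors ::
    "real \<Rightarrow> ('n::finite \<Rightarrow> nat) \<Rightarrow> ('k::finite \<Rightarrow> nat) \<Rightarrow> ('n \<Rightarrow> 'n \<Rightarrow> 'k \<Rightarrow> real) \<Rightarrow> 'n \<Rightarrow> nat \<Rightarrow> real"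
  where
  "exp_block_vectors C \<phi> \<psi> X i t =
     (if t < CARD('n) then if t = \<phi> i then C powr t else 0
      else if t < (CARD('k) + 1) * CARD('n)
      then C powr (- real t) * X (inv \<phi> (t mod CARD('n))) i (inv \<psi> (t div CARD('n) - 1))
      else 0)"

lemma exp_block_vectors_bound:
  fixes X :: "'n::finite \<Rightarrow> 'n \<Rightarrow> 'k::finite \<Rightarrow> real"
  assumes "C \<ge> 1" "M \<ge> 1" "\<And>i j k. \<bar>X i j k\<bar> \<le> M"
  shows "\<bar>exp_block_vectors C \<phi> \<psi> X i t\<bar> \<le> M * C powr (if t < CARD('n) then real t else - real t)"
  using assms by (auto simp: exp_block_vectors_def abs_mult mult_right_mono)

lemma exp_block_vectors_aligned:
  fixes \<phi> :: "'n::finite \<Rightarrow> nat" and \<psi> :: "'k::finite \<Rightarrow> nat" and k :: 'k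
  assumes \<phi>: "bij_betw \<phi> UNIV {..<CARD('n)}" and \<psi>: "bij_betw \<psi> UNIV {..<CARD('k)}"
    and "C > 0" and t: "t < CARD('n)"
  defines "m \<equiv> (\<psi> k + 1) * CARD('n)"
  shows "C powr m * exp_block_vectors C \<phi> \<psi> X i t * exp_block_vectors C \<phi> \<psi> X j (m + t)
       = (if t = \<phi> i then X i j k else 0)"
proof -
  have "\<psi> k < CARD('k)"
    using \<psi> by (auto simp: bij_betw_def)
  then have "m \<le> CARD('k) * CARD('n)"
    unfolding m_def by (intro mult_le_mono1) simp
  then have "m + t < (CARD('k) + 1) * CARD('n)"
    using t by simp
  moreover have "m + t = t + (\<psi> k + 1) * CARD('n)"
    by (simp add: m_def)
  then have "(m + t) mod CARD('n) = t" "(m + t) div CARD('n) = \<psi> k + 1"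
    using t by (simp_all only: mod_mult_self1 div_mult_self1 mod_less div_less)
  ultimately have "exp_block_vectors C \<phi> \<psi> X j (m + t) = C powr (- real (m + t)) * X (inv \<phi> t) j k"
    using \<psi> by (simp add: exp_block_vectors_def m_def bij_betw_inv_into_left)
  then show ?thesis
    using t \<phi> \<open>C > 0\<close> by (auto simp: exp_block_vectors_def powr_add[symmetric] bij_betw_inv_into_left)
qed

lemma exp_block_vectors_score_error:
  fixes X :: "'n::finite \<Rightarrow> 'n \<Rightarrow> 'k::finite \<Rightarrow> real" and \<phi> :: "'n \<Rightarrow> nat" and \<psi> :: "'k \<Rightarrow> nat"
  assumes \<phi>: "bij_betw \<phi> UNIV {..<CARD('n)}" and \<psi>: "bij_betw \<psi> UNIV {..<CARD('k)}"
    and r: "2 * CARD('k) * CARD('n) < r" and C: "C \<ge> 1" and M: "M \<ge> 1" "\<And>i j k. \<bar>X i j k\<bar> \<le> M"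
  defines "A \<equiv> exp_block_vectors C \<phi> \<psi> X" and "m \<equiv> \<lambda>k. (\<psi> k + 1) * CARD('n)"
  shows "\<bar>hole_score r A (\<lambda>k m'. if m' = m k then C powr m k else 0) i j k - X i j k\<bar> \<le> real r * M\<^sup>2 / C"
proof -
  define N where "N = CARD('n)"
  let ?f = "\<lambda>t. C powr m k * A i t * A j ((m k + t) mod r)"
  have "\<psi> k < CARD('k)"
    using \<psi> by (auto simp: bij_betw_def)
  then have "m k \<le> CARD('k) * N"
    unfolding m_def N_def by (intro mult_le_mono1) simp
  then have m: "N \<le> m k" "2 * m k < r" "0 < N"
    using r by (simp_all add: m_def N_def)
  have A_bound: "\<bar>A i t\<bar> \<le> M * C powr (if t < N then real t else - real t)" for i t
    using exp_block_vectors_bound[where X = X, OF C M] by (simp add: A_def N_def)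
  have "hole_score r A (\<lambda>k m'. if m' = m k then C powr m k else 0) i j k
      = C powr m k * circ_corr r (A i) (A j) (m k)"
    using m(2) by (simp add: hole_score_def if_distrib[of "\<lambda>x. x * _"] sum.delta' cong: if_cong)
  also have "\<dots> = (\<Sum>t<N. ?f t) + (\<Sum>t\<in>{N..<r}. ?f t)"
    using m sum.atLeastLessThan_concat[of 0 N r ?f]
    by (simp add: circ_corr_def sum_distrib_left mult.assoc atLeast0LessThan)
  also have "(\<Sum>t<N. ?f t) = (\<Sum>t<N. if t = \<phi> i then X i j k else 0)"
    using m exp_block_vectors_aligned[OF \<phi> \<psi>] C
    by (intro sum.cong) (auto simp: A_def m_def N_def)
  also have "\<dots> = X i j k"
    using bij_betwE[OF \<phi>] by (simp add: sum.delta' N_def)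
  finally have "\<bar>hole_score r A (\<lambda>k m'. if m' = m k then C powr m k else 0) i j k - X i j k\<bar>
      = \<bar>\<Sum>t\<in>{N..<r}. ?f t\<bar>"
    by simp
  also have "\<dots> \<le> (\<Sum>t\<in>{N..<r}. M\<^sup>2 / C)"
    using wrapped_term_bound[OF C m(2,1,3) _ _ A_bound A_bound]
    by (intro order_trans[OF sum_abs] sum_mono) auto
  also have "\<dots> \<le> real r * M\<^sup>2 / C"
    using C by (simp add: divide_right_mono mult_right_mono)
  finally show ?thesis .
qed

lemma hole_approximable_if_large_size:
  fixes X :: "'n::finite \<Rightarrow> 'n \<Rightarrow> 'k::finite \<Rightarrow> real"
  assumes r: "2 * CARD('k) * CARD('n) < r"
  shows "hole_approximable r X"
  unfolding hole_approximable_def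
proof (intro allI impI)
  fix \<epsilon> :: real assume \<epsilon>: "\<epsilon> > 0"
  obtain \<phi> :: "'n \<Rightarrow> nat" where \<phi>: "bij_betw \<phi> UNIV {..<CARD('n)}"
    using ex_bij_betw_finite_nat[of "UNIV::'n set"] by (auto simp: atLeast0LessThan)
  obtain \<psi> :: "'k \<Rightarrow> nat" where \<psi>: "bij_betw \<psi> UNIV {..<CARD('k)}"
    using ex_bij_betw_finite_nat[of "UNIV::'k set"] by (auto simp: atLeast0LessThan)
  obtain M where M: "M \<ge> 1" "\<And>i j k. \<bar>X i j k\<bar> \<le> M"
    using obtain_abs_bound[of UNIV "\<lambda>(i, j, k). X i j k"] by (metis finite_class.finite_UNIV case_prod_conv UNIV_I)
  define C where "C = real r * M\<^sup>2 / \<epsilon> + 1"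
  have "C \<ge> 1"
    using \<epsilon> by (simp add: C_def)
  moreover have "real r * M\<^sup>2 \<le> \<epsilon> * C"
    using \<epsilon> by (simp add: C_def algebra_simps)
  ultimately have "real r * M\<^sup>2 / C \<le> \<epsilon>"
    by (simp add: divide_le_eq mult.commute)
  then show "\<exists>A R. \<forall>i j k. \<bar>hole_score r A R i j k - X i j k\<bar> \<le> \<epsilon>"
    using exp_block_vectors_score_error[OF \<phi> \<psi> r \<open>C \<ge> 1\<close> M] by (meson order_trans)
qed

definition gauss_weight :: "real \<Rightarrow> nat \<Rightarrow> nat \<Rightarrow> real" where
  "gauss_weight \<tau> S t = exp (- \<tau> * (real t - (2 * real S - 1) / 2)\<^sup>2)"

lemma gauss_weight_nonzero [simp]: "gauss_weight \<tau> S t \<noteq> 0"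
  by (simp add: gauss_weight_def)

lemma gauss_weight_ratio:
  assumes "s < S"
  shows "gauss_weight \<tau> S t * gauss_weight \<tau> S (t + (2 * S - 1 - 2 * s))
           / (gauss_weight \<tau> S s * gauss_weight \<tau> S (2 * S - 1 - s))
         = exp (- 2 * \<tau> * (real t - real s)\<^sup>2)"
proof -
  define c where "c = (2 * real S - 1) / 2"
  have "real (t + (2 * S - 1 - 2 * s)) = real t + 2 * real S - 1 - 2 * real s"
    "real (2 * S - 1 - s) = 2 * real S - 1 - real s"
    using assms by (simp_all add: of_nat_diff)
  then have "gauss_weight \<tau> S t * gauss_weight \<tau> S (t + (2 * S - 1 - 2 * s))
           / (gauss_weight \<tau> S s * gauss_weight \<tau> S (2 * S - 1 - s))
      = exp (- \<tau> * ((real t - c)\<^sup>2 + (real t + 2 * real S - 1 - 2 * real s - c)\<^sup>2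
                     - (real s - c)\<^sup>2 - (2 * real S - 1 - real s - c)\<^sup>2))"
    unfolding gauss_weight_def c_def[symmetric]
    by (simp add: exp_add[symmetric] exp_diff[symmetric] algebra_simps)
  also have "(real t - c)\<^sup>2 + (real t + 2 * real S - 1 - 2 * real s - c)\<^sup>2
               - (real s - c)\<^sup>2 - (2 * real S - 1 - real s - c)\<^sup>2 = 2 * (real t - real s)\<^sup>2"
    unfolding c_def by (simp add: power2_eq_square algebra_simps)
  finally show ?thesis by simp
qed

lemma circ_corr_gauss_weighted_eq:
  fixes f h :: "nat \<Rightarrow> real" and \<tau> :: real
  assumes s: "s < S" and r: "4 * S < r" and f_supp: "\<And>t. 2 * S \<le> t \<Longrightarrow> f t = 0"
  defines "g \<equiv> gauss_weight \<tau> S" and "d \<equiv> 2 * S - 1 - 2 * s"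
  shows "circ_corr r (\<lambda>t. g t * f t) (\<lambda>t. g t * h t) d / (g s * g (2 * S - 1 - s))
       = (\<Sum>t<2 * S. exp (- 2 * \<tau> * (real t - real s)\<^sup>2) * f t * h (t + d))"
proof -
  have "circ_corr r (\<lambda>t. g t * f t) (\<lambda>t. g t * h t) d
      = (\<Sum>t<2 * S. g t * f t * (g ((d + t) mod r) * h ((d + t) mod r)))"
    unfolding circ_corr_def using r f_supp by (intro sum.mono_neutral_right) auto
  also have "\<dots> = (\<Sum>t<2 * S. g t * f t * (g (t + d) * h (t + d)))"
    using r by (intro sum.cong) (auto simp: d_def add.commute)
  also have "\<dots> = (\<Sum>t<2 * S. g s * g (2 * S - 1 - s) * (exp (- 2 * \<tau> * (real t - real s)\<^sup>2) * f t * h (t + d)))"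
  proof (rule sum.cong)
    fix t
    have "g t * g (t + d) = g s * g (2 * S - 1 - s) * exp (- 2 * \<tau> * (real t - real s)\<^sup>2)"
      using gauss_weight_ratio[OF s, of \<tau> t] by (simp add: g_def d_def divide_eq_eq mult_ac)
    then show "g t * f t * (g (t + d) * h (t + d))
        = g s * g (2 * S - 1 - s) * (exp (- 2 * \<tau> * (real t - real s)\<^sup>2) * f t * h (t + d))"
      by (simp add: mult_ac)
  qed simp
  finally show ?thesis
    by (simp add: g_def sum_distrib_left[symmetric])
qed

lemma circ_corr_gauss_weighted:
  fixes f h :: "nat \<Rightarrow> real" and \<tau> M :: real
  assumes s: "s < S" and r: "4 * S < r" and \<tau>: "\<tau> \<ge> 0"
    and f_supp: "\<And>t. 2 * S \<le> t \<Longrightarrow> f t = 0"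
    and f_bound: "\<And>t. \<bar>f t\<bar> \<le> M" and h_bound: "\<And>t. \<bar>h t\<bar> \<le> M"
  defines "g \<equiv> gauss_weight \<tau> S" and "d \<equiv> 2 * S - 1 - 2 * s"
  shows "\<bar>circ_corr r (\<lambda>t. g t * f t) (\<lambda>t. g t * h t) d / (g s * g (2 * S - 1 - s))
           - f s * h (2 * S - 1 - s)\<bar> \<le> 2 * real S * exp (- 2 * \<tau>) * M\<^sup>2"
proof -
  define e where "e t = exp (- 2 * \<tau> * (real t - real s)\<^sup>2) * f t * h (t + d)" for t
  have "circ_corr r (\<lambda>t. g t * f t) (\<lambda>t. g t * h t) d / (g s * g (2 * S - 1 - s))
      = (\<Sum>t<2 * S. e t)"
    using circ_corr_gauss_weighted_eq[where f = f and h = h and \<tau> = \<tau>, OF s r f_supp]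
    by (simp add: e_def g_def d_def)
  also have "\<dots> = e s + (\<Sum>t\<in>{..<2 * S} - {s}. e t)"
    using s by (simp add: sum.remove)
  finally have corr: "circ_corr r (\<lambda>t. g t * f t) (\<lambda>t. g t * h t) d / (g s * g (2 * S - 1 - s))
      = e s + (\<Sum>t\<in>{..<2 * S} - {s}. e t)" .
  have "e s = f s * h (2 * S - 1 - s)"
    using s by (simp add: e_def d_def)
  have "\<bar>e t\<bar> \<le> exp (- 2 * \<tau>) * M\<^sup>2" if "t \<noteq> s" for t
  proof -
    have "1 \<le> \<bar>real t - real s\<bar>"
      using that by linarith
    then have "1 \<le> (real t - real s)\<^sup>2"
      by (metis one_le_power power2_abs)
    then have "exp (- 2 * \<tau> * (real t - real s)\<^sup>2) \<le> exp (- 2 * \<tau>)"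
      using mult_left_mono[of 1 "(real t - real s)\<^sup>2" \<tau>] \<tau> by simp
    moreover have "\<bar>f t\<bar> * \<bar>h (t + d)\<bar> \<le> M\<^sup>2"
      using f_bound h_bound order_trans[OF abs_ge_zero f_bound]
      by (simp add: power2_eq_square mult_mono)
    ultimately show ?thesis
      unfolding e_def abs_mult by (simp add: mult.assoc mult_mono)
  qed
  then have "\<bar>\<Sum>t\<in>{..<2 * S} - {s}. e t\<bar> \<le> real (card ({..<2 * S} - {s})) * (exp (- 2 * \<tau>) * M\<^sup>2)"
    by (intro order_trans[OF sum_abs] order_trans[OF sum_bounded_above]) auto
  also have "\<dots> \<le> 2 * real S * (exp (- 2 * \<tau>) * M\<^sup>2)"
    using s by (intro mult_right_mono) auto
  finally show ?thesis
    using corr \<open>e s = f s * h (2 * S - 1 - s)\<close> by (simp add: mult.assoc)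
qed

lemma exists_exp_decay_le:
  fixes c \<epsilon> :: real
  assumes "c \<ge> 0" "\<epsilon> > 0"
  obtains \<tau> where "\<tau> \<ge> 0" "c * exp (- 2 * \<tau>) \<le> \<epsilon>"
proof
  define \<tau> where "\<tau> = ln ((c + \<epsilon>) / \<epsilon>) / 2"
  show "\<tau> \<ge> 0"
    using assms by (simp add: \<tau>_def)
  have "exp (- 2 * \<tau>) = inverse (exp (ln ((c + \<epsilon>) / \<epsilon>)))"
    by (simp add: \<tau>_def exp_minus)
  also have "\<dots> = \<epsilon> / (c + \<epsilon>)"
    using assms by simp
  moreover have "c * \<epsilon> \<le> \<epsilon> * (c + \<epsilon>)"
    using assms by (simp add: algebra_simps)
  ultimately show "c * exp (- 2 * \<tau>) \<le> \<epsilon>"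
    using assms by (simp add: pos_divide_le_eq add_nonneg_pos)
qed

lemma mirrored_gauss_score_error:
  fixes u v :: "nat \<Rightarrow> 'n \<Rightarrow> real" and \<kappa> :: "nat \<Rightarrow> 'k" and S :: nat and \<tau> M :: real
  defines "F \<equiv> \<lambda>t i. if t < S then u t i else if t < 2 * S then v (2 * S - 1 - t) i else 0"
    and "g \<equiv> gauss_weight \<tau> S"
  assumes r: "4 * S < r" and \<tau>: "\<tau> \<ge> 0" and F_bound: "\<And>t i. \<bar>F t i\<bar> \<le> M"
  shows "\<bar>hole_score r (\<lambda>i t. g t * F t i)
            (\<lambda>k m. \<Sum>s<S. if \<kappa> s = k \<and> m = 2 * S - 1 - 2 * s then inverse (g s * g (2 * S - 1 - s)) else 0)
            i j k
          - (\<Sum>s<S. if \<kappa> s = k then u s i * v s j else 0)\<bar>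
         \<le> real S * (2 * real S * exp (- 2 * \<tau>) * M\<^sup>2)"
proof -
  define A where "A = (\<lambda>i t. g t * F t i)"
  define W where "W = (\<lambda>s. g s * g (2 * S - 1 - s))"
  define d where "d = (\<lambda>s. 2 * S - 1 - 2 * s)"
  have "hole_score r A (\<lambda>k m. \<Sum>s<S. if \<kappa> s = k \<and> m = d s then inverse (W s) else 0) i j k
      = (\<Sum>s<S. if \<kappa> s = k then circ_corr r (A i) (A j) (d s) / W s else 0)"
    using r by (subst hole_score_slots) (auto simp: d_def divide_inverse_commute cong: if_cong)
  then have "\<bar>hole_score r A (\<lambda>k m. \<Sum>s<S. if \<kappa> s = k \<and> m = d s then inverse (W s) else 0) i j k
        - (\<Sum>s<S. if \<kappa> s = k then u s i * v s j else 0)\<bar>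
      = \<bar>\<Sum>s<S. if \<kappa> s = k then circ_corr r (A i) (A j) (d s) / W s - u s i * v s j else 0\<bar>"
    by (simp add: sum_subtractf[symmetric] if_distrib[of "\<lambda>x. x - _"] cong: if_cong)
  also have "\<dots> \<le> (\<Sum>s<S. 2 * real S * exp (- 2 * \<tau>) * M\<^sup>2)"
  proof (intro order_trans[OF sum_abs] sum_mono)
    fix s assume "s \<in> {..<S}"
    then have "\<bar>circ_corr r (A i) (A j) (d s) / W s - F s i * F (2 * S - 1 - s) j\<bar>
        \<le> 2 * real S * exp (- 2 * \<tau>) * M\<^sup>2"
      unfolding A_def W_def d_def g_def
      using r \<tau> F_bound by (intro circ_corr_gauss_weighted) (auto simp: F_def)
    moreover have "F s i = u s i" "F (2 * S - 1 - s) j = v s j"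
      using \<open>s \<in> {..<S}\<close> by (auto simp: F_def)
    ultimately show "\<bar>if \<kappa> s = k then circ_corr r (A i) (A j) (d s) / W s - u s i * v s j else 0\<bar>
        \<le> 2 * real S * exp (- 2 * \<tau>) * M\<^sup>2"
      by simp
  qed
  finally show ?thesis
    by (simp add: A_def W_def d_def cong: if_cong)
qed

lemma hole_approximable_rank_one_sum:
  fixes u v :: "nat \<Rightarrow> 'n::finite \<Rightarrow> real" and \<kappa> :: "nat \<Rightarrow> 'k"
  assumes r: "4 * S < r"
  shows "hole_approximable r (\<lambda>i j k. \<Sum>s<S. if \<kappa> s = k then u s i * v s j else 0)"
  unfolding hole_approximable_def
proof (intro allI impI)
  fix \<epsilon> :: real assume \<epsilon>: "\<epsilon> > 0"
  define F where "F t i = (if t < S then u t i else if t < 2 * S then v (2 * S - 1 - t) i else 0)" for t i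
  obtain M where M: "M \<ge> 1" "\<And>t i. t < 2 * S \<Longrightarrow> \<bar>F t i\<bar> \<le> M"
    using obtain_abs_bound[of "{..<2 * S} \<times> UNIV" "\<lambda>(t, i). F t i"]
    by (metis (no_types, lifting) finite_SigmaI finite_lessThan finite_class.finite_UNIV
        lessThan_iff mem_Sigma_iff UNIV_I case_prod_conv)
  have F_bound: "\<bar>F t i\<bar> \<le> M" for t i
    using M by (cases "t < 2 * S") (simp_all add: F_def)
  obtain \<tau> where \<tau>: "\<tau> \<ge> 0" "real S * (2 * real S * exp (- 2 * \<tau>) * M\<^sup>2) \<le> \<epsilon>"
    using exists_exp_decay_le[of "2 * real S * real S * M\<^sup>2" \<epsilon>] \<epsilon> by (auto simp: mult_ac)
  show "\<exists>A R. \<forall>i j k. \<bar>hole_score r A R i j k - (\<Sum>s<S. if \<kappa> s = k then u s i * v s j else 0)\<bar> \<le> \<epsilon>"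
    using mirrored_gauss_score_error[where u = u and v = v and \<kappa> = \<kappa> and M = M, OF r \<tau>(1) F_bound[unfolded F_def]] \<tau>(2)
    by (meson order_trans)
qed

lemma rank_factorization:
  fixes A :: "real^'n::finite^'m::finite"
  obtains u v where "\<And>i j. A $ i $ j = (\<Sum>l<rank A. u l i * v l j)"
proof -
  obtain Bs where Bs: "Bs \<subseteq> rows A" "independent Bs" "rows A \<subseteq> span Bs" "card Bs = dim (rows A)"
    by (rule basis_exists)
  have "finite Bs"
    using Bs(2) by (rule finiteI_independent)
  obtain h where h: "bij_betw h {..<rank A} Bs"
    using ex_bij_betw_nat_finite[OF \<open>finite Bs\<close>] Bs(4) by (auto simp: row_rank_def atLeast0LessThan)
  have "\<exists>c. row i A = (\<Sum>x\<in>Bs. c x *\<^sub>R x)" for i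
    using Bs(3) span_finite[OF \<open>finite Bs\<close>] by (auto simp: rows_def)
  then obtain c where c: "\<And>i. row i A = (\<Sum>x\<in>Bs. c i x *\<^sub>R x)"
    by metis
  have "A $ i $ j = (\<Sum>l<rank A. c i (h l) * h l $ j)" for i j
  proof -
    have "A $ i $ j = (\<Sum>x\<in>Bs. c i x * x $ j)"
      using c[of i] by (simp add: row_def sum_component vec_eq_iff)
    also have "\<dots> = (\<Sum>l<rank A. c i (h l) * h l $ j)"
      by (rule sum.reindex_bij_betw[OF h, symmetric])
    finally show ?thesis .
  qed
  then show ?thesis
    by (rule that)
qed

lemma sum_of_rank_one_families_reindex:
  fixes U V :: "'k::finite \<Rightarrow> nat \<Rightarrow> 'a \<Rightarrow> real" and \<rho> :: "'k \<Rightarrow> nat"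
  obtains \<kappa> :: "nat \<Rightarrow> 'k" and u v :: "nat \<Rightarrow> 'a \<Rightarrow> real"
  where "\<And>k i j. (\<Sum>l<\<rho> k. U k l i * V k l j)
           = (\<Sum>s<(\<Sum>k\<in>UNIV. \<rho> k). if \<kappa> s = k then u s i * v s j else 0)"
proof -
  define P where "P = (SIGMA k:UNIV. {..<\<rho> k})"
  have "finite P" "card P = (\<Sum>k\<in>UNIV. \<rho> k)"
    by (simp_all add: P_def card_SigmaI)
  then obtain h where h: "bij_betw h {..<\<Sum>k\<in>UNIV. \<rho> k} P"
    using ex_bij_betw_nat_finite[of P] by (auto simp: atLeast0LessThan)
  have "(\<Sum>l<\<rho> k. U k l i * V k l j)
      = (\<Sum>s<(\<Sum>k\<in>UNIV. \<rho> k). if fst (h s) = k then U k (snd (h s)) i * V k (snd (h s)) j else 0)"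
    for k i j
  proof -
    have "(\<Sum>s<(\<Sum>k\<in>UNIV. \<rho> k). if fst (h s) = k then U k (snd (h s)) i * V k (snd (h s)) j else 0)
        = (\<Sum>p\<in>P. if fst p = k then U k (snd p) i * V k (snd p) j else 0)"
      by (rule sum.reindex_bij_betw[OF h])
    also have "\<dots> = (\<Sum>k'\<in>UNIV. \<Sum>l<\<rho> k'. if k' = k then U k l i * V k l j else 0)"
      unfolding P_def by (simp add: sum.Sigma split_def)
    also have "\<dots> = (\<Sum>k'\<in>UNIV. if k' = k then \<Sum>l<\<rho> k. U k l i * V k l j else 0)"
      by (intro sum.cong) auto
    finally show ?thesis
      by simp
  qed
  then show ?thesis
    by (intro that[of "\<lambda>s. fst (h s)" "\<lambda>s. U (fst (h s)) (snd (h s))" "\<lambda>s. V (fst (h s)) (snd (h s))"])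
       (simp cong: if_cong)
qed

lemma hole_approximable_low_rank:
  fixes M :: "'k::finite \<Rightarrow> real^'n::finite^'n"
  assumes "4 * (\<Sum>k\<in>UNIV. rank (M k)) < r"
  shows "hole_approximable r (\<lambda>i j k. M k $ i $ j)"
proof -
  have "\<exists>u v. \<forall>i j. M k $ i $ j = (\<Sum>l<rank (M k). u l i * v l j)" for k
    by (metis rank_factorization)
  then obtain U V where "\<And>k i j. M k $ i $ j = (\<Sum>l<rank (M k). U k l i * V k l j)"
    by metis
  moreover obtain \<kappa> :: "nat \<Rightarrow> 'k" and u v where "\<And>k i j. (\<Sum>l<rank (M k). U k l i * V k l j)
      = (\<Sum>s<(\<Sum>k\<in>UNIV. rank (M k)). if \<kappa> s = k then u s i * v s j else 0)"
    using sum_of_rank_one_families_reindex[where \<rho> = "\<lambda>k. rank (M k)" and U = U and V = V] by blast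
  ultimately show ?thesis
    using hole_approximable_rank_one_sum[OF assms, of \<kappa> u v] by simp
qed

lemma rrank_attained:
  assumes "round_mat A = Bm"
  obtains A' where "round_mat A' = Bm" "rank A' = rrank Bm"
proof -
  have "rrank Bm \<in> {rank A | A. round_mat A = Bm}"
    unfolding rrank_def using assms by (intro Inf_nat_def1) blast
  then show ?thesis
    using that by auto
qed

lemma round_mat_bool_slice: "round_mat (bool_slice B k) = bool_slice B k"
  by (simp add: vec_eq_iff round_mat_def bool_slice_def)

lemma round_mat_eq_bool_slice_iff:
  assumes "round_mat A = bool_slice B k"
  shows "B i j k \<longleftrightarrow> 1 / 2 \<le> A $ i $ j"
proof -
  have "round_mat A $ i $ j = bool_slice B k $ i $ j"
    using assms by simp
  then show ?thesis
    by (simp add: round_mat_def bool_slice_def split: if_splits)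
qed

theorem corollary4:
  fixes B :: "'n::finite \<Rightarrow> 'n \<Rightarrow> 'k::finite \<Rightarrow> bool" and r :: nat
  assumes "CARD('n) \<ge> 2"
    and "r \<ge> 1"
    and "r \<ge> min (2 * CARD('k) * CARD('n) + 1) (4 * (\<Sum>k\<in>UNIV. rrank (bool_slice B k)) + 1)"
  shows "\<exists>P \<in> rank_tensor ` (hole_models r :: ('n \<Rightarrow> 'n \<Rightarrow> 'k \<Rightarrow> real) set). consistent P B"
proof (cases "2 * CARD('k) * CARD('n) < r")
  case True
  then have "hole_approximable r ((\<lambda>i j k. if B i j k then 1 else 0) :: 'n \<Rightarrow> 'n \<Rightarrow> 'k \<Rightarrow> real)"
    by (rule hole_approximable_if_large_size)
  then show ?thesis
    by (rule hole_approximable_imp_consistent) simp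
next
  case False
  have "\<exists>A. round_mat A = bool_slice B k \<and> rank A = rrank (bool_slice B k)" for k
    using rrank_attained[OF round_mat_bool_slice] by metis
  then obtain A where A: "\<And>k. round_mat (A k) = bool_slice B k" "\<And>k. rank (A k) = rrank (bool_slice B k)"
    by metis
  have "4 * (\<Sum>k\<in>UNIV. rank (A k)) < r"
    using False assms(3) by (simp add: A(2))
  then have "hole_approximable r (\<lambda>i j k. A k $ i $ j)"
    by (rule hole_approximable_low_rank)
  then show ?thesis
    by (rule hole_approximable_imp_consistent) (use round_mat_eq_bool_slice_iff[OF A(1)] in force)
qed

end
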